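(* Let $\mathcal{G}=\langle S,A,T,s_0,F\rangle$ be a two-player turn-based deterministic reachability game and let $Y\subseteq \mathrm{Win}_2(\mathcal{G},F)\setminus F$. Let $\mathcal{G}_{\emptyset,Y}=\langle S,A,T_{\emptyset,Y},s_0,F\cup Y\rangle$ be the game in which $T_{\emptyset,Y}(s,a)=T(s,a)$ if $s\notin Y$ and $T_{\emptyset,Y}(s,a)=s$ if $s\in Y$, and whose goal set (for P2) is $F\cup Y$. Then for every state $s\in\mathrm{Win}_2(\mathcal{G},F)$, the rank of $s$ in $\mathcal{G}_{\emptyset,Y}$ (with respect to the target $F\cup Y$) is less than or equal to its rank in $\mathcal{G}$ (with respect to the target $F$).
   Context: A two-player turn-based deterministic reachability game is a tuple $\mathcal{G}=\langle S,A,T,s_0,F\rangle$ where $S$ is a finite set of states partitioned into P1 states $S_1$ and P2 states $S_2$; $A=A_1\cup A_2$ with $A_1$ the actions of P1 and $A_2$ the actions of P2; $T:(S_1\times A_1)\cup(S_2\times A_2)\to S$ is a deterministic (possibly partial) transition function, an action $a$ being enabled at $s$ if $T(s,a)$ is defined, and every state has at least one enabled action; $s_0\in S$ is an initial state; $F\subseteq S$ is a set of sink states (P2's goal). For a game with transition function $\tau$ and a target set $R\subseteq S$, define level sets $Z_0=R$ and $Z_{k+1}=Z_k\cup\{s\in S_1:\tau(s,a)\in Z_k\text{ for every }a\text{ enabled at }s\}\cup\{s\in S_2:\tau(s,a)\in Z_k\text{ for some enabled }a\}$. P2's winning region is $\bigcup_k Z_k$ (the set of states from which P2 can force a visit to $R$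 in finitely many steps); for $\mathcal{G}$ with target $F$ this is denoted $\mathrm{Win}_2(\mathcal{G},F)$. The rank of a state $s$ is $\min\{k:s\in Z_k\}$ (and $\infty$ if $s$ lies in no $Z_k$), i.e., the minimum number of steps within which P2 can guarantee a visit to the target regardless of P1's play. *)

theory Defs
  imports Main "HOL-Library.Extended_Nat"
begin

text \<open>States S (partitioned into S1, S2), actions A1, A2, partial transition
  function T (None = action not enabled), initial state s0, sink goal set F.\<close>

definition enabled :: "('s \<Rightarrow> 'a \<Rightarrow> 's option) \<Rightarrow> 's \<Rightarrow> 'a \<Rightarrow> bool" where
  "enabled T s a \<longleftrightarrow> T s a \<noteq> None"

definition game :: "'s set \<Rightarrow> 's set \<Rightarrow> 'a set \<Rightarrow> 'a set \<Rightarrow>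
    ('s \<Rightarrow> 'a \<Rightarrow> 's option) \<Rightarrow> 's \<Rightarrow> 's set \<Rightarrow> bool" where
  "game S1 S2 A1 A2 T s0 F \<longleftrightarrow>
     finite (S1 \<union> S2) \<and> S1 \<inter> S2 = {} \<and>
     s0 \<in> S1 \<union> S2 \<and> F \<subseteq> S1 \<union> S2 \<and>
     (\<forall>s a. enabled T s a \<longrightarrow> (s \<in> S1 \<and> a \<in> A1) \<or> (s \<in> S2 \<and> a \<in> A2)) \<and>
     (\<forall>s a. enabled T s a \<longrightarrow> the (T s a) \<in> S1 \<union> S2) \<and>
     (\<forall>s \<in> S1 \<union> S2. \<exists>a. enabled T s a) \<and>
     (\<forall>s \<in> F. \<forall>a. enabled T s a \<longrightarrow> T s a = Some s)"

fun Z :: "'s set \<Rightarrow> 's set \<Rightarrow> ('s \<Rightarrow> 'a \<Rightarrow> 's option) \<Rightarrow> 's set \<Rightarrow> nat \<Rightarrow> 's set" where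
  "Z S1 S2 T R 0 = R"
| "Z S1 S2 T R (Suc k) = Z S1 S2 T R k
     \<union> {s \<in> S1. \<forall>a. enabled T s a \<longrightarrow> the (T s a) \<in> Z S1 S2 T R k}
     \<union> {s \<in> S2. \<exists>a. enabled T s a \<and> the (T s a) \<in> Z S1 S2 T R k}"

definition Win2 :: "'s set \<Rightarrow> 's set \<Rightarrow> ('s \<Rightarrow> 'a \<Rightarrow> 's option) \<Rightarrow> 's set \<Rightarrow> 's set" where
  "Win2 S1 S2 T R = (\<Union>k. Z S1 S2 T R k)"

definition rank :: "'s set \<Rightarrow> 's set \<Rightarrow> ('s \<Rightarrow> 'a \<Rightarrow> 's option) \<Rightarrow> 's set \<Rightarrow> 's \<Rightarrow> enat" where
  "rank S1 S2 T R s = (if \<exists>k. s \<in> Z S1 S2 T R k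
      then enat (LEAST k. s \<in> Z S1 S2 T R k) else \<infinity>)"

definition T_Y :: "('s \<Rightarrow> 'a \<Rightarrow> 's option) \<Rightarrow> 's set \<Rightarrow> 's \<Rightarrow> 'a \<Rightarrow> 's option" where
  "T_Y T Y s a = (if s \<in> Y then map_option (\<lambda>_. s) (T s a) else T s a)"

end

theory Submission
  imports Defs
begin

text \<open>Enlarging the target can only help P2, and on states outside the enlarged target the two
  games have the same moves. Hence every level set of the original game is contained in the
  corresponding level set of the modified one, and ranks can only decrease.\<close>

lemma Z_mono_level: "k \<le> l \<Longrightarrow> Z S1 S2 T R k \<subseteq> Z S1 S2 T R l"
  by (induction l rule: dec_induct) auto

lemma target_subset_Z: "R \<subseteq> Z S1 S2 T R k"
  using Z_mono_level[of 0 k] by simp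

lemma Z_subset_Z_larger_target:
  assumes "R \<subseteq> R'" and agree: "\<And>s. s \<notin> R' \<Longrightarrow> T' s = T s"
  shows "Z S1 S2 T R k \<subseteq> Z S1 S2 T' R' k"
proof (induction k)
  case 0
  show ?case using assms(1) by simp
next
  case (Suc k)
  show ?case
  proof
    fix s assume s: "s \<in> Z S1 S2 T R (Suc k)"
    show "s \<in> Z S1 S2 T' R' (Suc k)"
    proof (cases "s \<in> R'")
      case True
      then show ?thesis using target_subset_Z[of R' S1 S2 T'] by blast
    next
      case False
      then have "T' s = T s" by (rule agree)
      with s Suc.IH show ?thesis by (auto simp: enabled_def)
    qed
  qed
qed

lemma rank_le_if_Z_subset:
  assumes "\<And>k. Z S1 S2 T R k \<subseteq> Z S1 S2 T' R' k"
  shows "rank S1 S2 T' R' s \<le> rank S1 S2 T R s"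
proof (cases "\<exists>k. s \<in> Z S1 S2 T R k")
  case True
  define n where "n = (LEAST k. s \<in> Z S1 S2 T R k)"
  have "s \<in> Z S1 S2 T R n" unfolding n_def using True by (rule LeastI_ex)
  then have "s \<in> Z S1 S2 T' R' n" using assms by blast
  then have "(LEAST k. s \<in> Z S1 S2 T' R' k) \<le> n" by (rule Least_le)
  then show ?thesis using True \<open>s \<in> Z S1 S2 T' R' n\<close> unfolding rank_def n_def by auto
next
  case False
  then show ?thesis by (simp add: rank_def)
qed

lemma T_Y_outside: "s \<notin> Y \<Longrightarrow> T_Y T Y s = T s"
  by (simp add: T_Y_def fun_eq_iff)

theorem lemma1:
  fixes S1 S2 :: "'s set" and A1 A2 :: "'a set"
    and T :: "'s \<Rightarrow> 'a \<Rightarrow> 's option" and s0 :: 's and F Y :: "'s set"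
  assumes "game S1 S2 A1 A2 T s0 F"
    and "Y \<subseteq> Win2 S1 S2 T F - F"
    and "s \<in> Win2 S1 S2 T F"
  shows "rank S1 S2 (T_Y T Y) (F \<union> Y) s \<le> rank S1 S2 T F s"
proof (rule rank_le_if_Z_subset)
  fix k
  show "Z S1 S2 T F k \<subseteq> Z S1 S2 (T_Y T Y) (F \<union> Y) k"
    by (rule Z_subset_Z_larger_target) (auto simp: T_Y_outside)
qed

end
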